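(* Let $R_1,R_2$ be i.i.d. nonnegative random variables with pdf $f_R$, and $\Theta_1,\Theta_2$ i.i.d. uniform on $[0,2\pi)$, independent of the $R_i$. Let $S_2=R_1+R_2$ and $Z_2=\sqrt{(R_1\cos\Theta_1+R_2\cos\Theta_2)^2+(R_1\sin\Theta_1+R_2\sin\Theta_2)^2}$. Then the joint pdf of $(S_2,Z_2)$ is $$f_{S_2,Z_2}(s,z)=\frac{2z}{\pi\sqrt{s^2-z^2}}\int_{\frac{s-z}{2}}^{\frac{s+z}{2}}\frac{f_R(x)f_R(s-x)}{\sqrt{z^2-(2x-s)^2}}\,\mathrm{d}x$$ when $s>z$, and $f_{S_2,Z_2}(s,z)=0$ otherwise. *)

theory Defs
  imports "HOL-Probability.Probability"
begin

end

theory Submission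
  imports Defs
begin

(* Given the radii R1 = a and R2 = b, Z2 is the third side of a triangle with sides a and b
   enclosing the angle Theta1 - Theta2 + pi, which is uniformly distributed modulo 2 pi.
   By symmetry it suffices to let this angle t range over [0, pi]; the substitution
   z = sqrt (a^2 + b^2 - 2 a b cos t) then gives Z2 the conditional density
   2 z / (pi sqrt (((a + b)^2 - z^2) (z^2 - (a - b)^2))) on (|a - b|, a + b), the Jacobian
   being simplified by Heron's formula. Integrating this against fR a * fR b and passing
   to the variables s = a + b and x = a yields the joint density of (S2, Z2). *)

lemma nn_integral_interval_shift:
  fixes F :: "real \<Rightarrow> ennreal"
  assumes [measurable]: "F \<in> borel_measurable borel"
  shows "(\<integral>\<^sup>+t\<in>{a..<b}. F (t + c) \<partial>lborel) = (\<integral>\<^sup>+t\<in>{a + c..<b + c}. F t \<partial>lborel)"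
  using nn_integral_real_affine[of "\<lambda>t. F t * indicator {a + c..<b + c} t" 1 c]
  by (simp add: indicator_def add.commute)

lemma nn_integral_periodic_shift_nonneg:
  fixes F :: "real \<Rightarrow> ennreal"
  assumes [measurable]: "F \<in> borel_measurable borel"
    and periodic: "\<And>t. F (t + p) = F t" and c: "0 \<le> c" "c \<le> p"
  shows "(\<integral>\<^sup>+t\<in>{0..<p}. F (t - c) \<partial>lborel) = (\<integral>\<^sup>+t\<in>{0..<p}. F t \<partial>lborel)"
proof -
  have split: "{-c..<p - c} = {-c..<0} \<union> {0..<p - c}" "{0..<p} = {p - c..<p} \<union> {0..<p - c}"
    using c by auto
  have "(\<integral>\<^sup>+t\<in>{0..<p}. F (t - c) \<partial>lborel) = (\<integral>\<^sup>+t\<in>{-c..<p - c}. F t \<partial>lborel)"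
    using nn_integral_interval_shift[where a=0 and b=p and c="-c"] by simp
  also have "\<dots> = (\<integral>\<^sup>+t\<in>{-c..<0}. F (t + p) \<partial>lborel) + (\<integral>\<^sup>+t\<in>{0..<p - c}. F t \<partial>lborel)"
    unfolding split(1) by (simp add: nn_integral_disjoint_pair periodic)
  also have "\<dots> = (\<integral>\<^sup>+t\<in>{0..<p}. F t \<partial>lborel)"
    unfolding split(2) by (simp add: nn_integral_interval_shift nn_integral_disjoint_pair)
  finally show ?thesis .
qed

lemma nn_integral_periodic_shift:
  fixes F :: "real \<Rightarrow> ennreal"
  assumes [measurable]: "F \<in> borel_measurable borel"
    and periodic: "\<And>t. F (t + p) = F t" and c: "\<bar>c\<bar> \<le> p"
  shows "(\<integral>\<^sup>+t\<in>{0..<p}. F (t - c) \<partial>lborel) = (\<integral>\<^sup>+t\<in>{0..<p}. F t \<partial>lborel)"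
proof (cases "0 \<le> c")
  case True
  then show ?thesis
    using c by (intro nn_integral_periodic_shift_nonneg) (auto simp: periodic)
next
  case False
  have "F (t - c) = F (t - (c + p))" for t
    using periodic[of "t - (c + p)"] by (simp add: algebra_simps)
  then have "(\<integral>\<^sup>+t\<in>{0..<p}. F (t - c) \<partial>lborel) = (\<integral>\<^sup>+t\<in>{0..<p}. F (t - (c + p)) \<partial>lborel)"
    by simp
  also have "\<dots> = (\<integral>\<^sup>+t\<in>{0..<p}. F t \<partial>lborel)"
    using False c by (intro nn_integral_periodic_shift_nonneg) (auto simp: periodic)
  finally show ?thesis .
qed

lemma nn_integral_symmetric_halves:
  fixes F :: "real \<Rightarrow> ennreal"
  assumes [measurable]: "F \<in> borel_measurable borel"
    and symmetric: "\<And>t. F (p - t) = F t"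
  shows "(\<integral>\<^sup>+t\<in>{0..<p}. F t \<partial>lborel) = 2 * (\<integral>\<^sup>+t\<in>{0..p/2}. F t \<partial>lborel)"
proof -
  have "indicator {p/2..<p} (p - t) = (indicator {0<..p/2} t :: ennreal)" for t
    by (auto simp: indicator_def)
  then have "(\<integral>\<^sup>+t\<in>{p/2..<p}. F t \<partial>lborel) = (\<integral>\<^sup>+t\<in>{0<..p/2}. F t \<partial>lborel)"
    using nn_integral_real_affine[of "\<lambda>t. F t * indicator {p/2..<p} t" "-1" p]
    by (simp add: symmetric)
  also have "\<dots> = (\<integral>\<^sup>+t\<in>{0..p/2}. F t \<partial>lborel)"
    by (rule nn_integral_cong_AE, use AE_lborel_singleton[of 0] in eventually_elim)
      (auto simp: indicator_def)
  moreover have "(\<integral>\<^sup>+t\<in>{0..<p/2}. F t \<partial>lborel) = (\<integral>\<^sup>+t\<in>{0..p/2}. F t \<partial>lborel)"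
    by (rule nn_integral_cong_AE, use AE_lborel_singleton[of "p/2"] in eventually_elim)
      (auto simp: indicator_def)
  moreover have "{0..<p} = {0..<p/2} \<union> {p/2..<p}"
    by auto
  ultimately show ?thesis
    by (simp add: nn_integral_disjoint_pair mult_2)
qed

definition triangle_side :: "real \<Rightarrow> real \<Rightarrow> real \<Rightarrow> real" where
  "triangle_side a b t = sqrt (a\<^sup>2 + b\<^sup>2 - 2 * a * b * cos t)"

lemma norm_sum_polar_eq_triangle_side:
  "sqrt ((a * cos t1 + b * cos t2)\<^sup>2 + (a * sin t1 + b * sin t2)\<^sup>2) = triangle_side a b (t1 - t2 + pi)"
proof -
  have "cos (t1 - t2 + pi) = - (cos t1 * cos t2 + sin t1 * sin t2)"
    by (simp add: cos_diff)
  then have "(a * cos t1 + b * cos t2)\<^sup>2 + (a * sin t1 + b * sin t2)\<^sup>2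
      = a\<^sup>2 + b\<^sup>2 - 2 * a * b * cos (t1 - t2 + pi)"
    using sin_cos_squared_add[of t1] sin_cos_squared_add[of t2] by algebra
  then show ?thesis
    by (simp add: triangle_side_def)
qed

lemma triangle_side_radicand:
  fixes a b t :: real
  shows "a\<^sup>2 + b\<^sup>2 - 2 * a * b * cos t = (a - b)\<^sup>2 + 2 * a * b * (1 - cos t)"
  by (simp add: power2_eq_square algebra_simps)

lemma triangle_side_radicand_pos:
  fixes a b t :: real
  assumes "0 < a" "0 < b" "a \<noteq> b"
  shows "0 < a\<^sup>2 + b\<^sup>2 - 2 * a * b * cos t"
  unfolding triangle_side_radicand using assms by (intro add_pos_nonneg mult_nonneg_nonneg) auto

lemma triangle_side_pos:
  assumes "0 < a" "0 < b" "a \<noteq> b"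
  shows "0 < triangle_side a b t"
  using triangle_side_radicand_pos[OF assms] by (simp add: triangle_side_def)

lemma triangle_side_has_real_derivative:
  assumes "0 < a" "0 < b" "a \<noteq> b"
  shows "(triangle_side a b has_real_derivative a * b * sin t / triangle_side a b t) (at t)"
proof -
  have "((\<lambda>t. sqrt (a\<^sup>2 + b\<^sup>2 - 2 * a * b * cos t)) has_real_derivative
      inverse (sqrt (a\<^sup>2 + b\<^sup>2 - 2 * a * b * cos t)) / 2 * (2 * a * b * sin t)) (at t)"
    using triangle_side_radicand_pos[OF assms, of t]
    by (intro DERIV_chain2[OF DERIV_real_sqrt]) (auto intro!: derivative_eq_intros)
  then show ?thesis
    by (simp add: triangle_side_def[abs_def] field_simps)
qed

lemma triangle_side_0: "triangle_side a b 0 = \<bar>a - b\<bar>"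
proof -
  have "a\<^sup>2 + b\<^sup>2 - 2 * a * b * cos 0 = (a - b)\<^sup>2"
    by (simp add: power2_eq_square algebra_simps)
  then show ?thesis
    by (simp add: triangle_side_def)
qed

lemma triangle_side_pi:
  assumes "0 \<le> a" "0 \<le> b"
  shows "triangle_side a b pi = a + b"
proof -
  have "a\<^sup>2 + b\<^sup>2 - 2 * a * b * cos pi = (a + b)\<^sup>2"
    by (simp add: power2_eq_square algebra_simps)
  then show ?thesis
    using assms by (simp add: triangle_side_def)
qed

text \<open>Heron's formula: both sides are four times the area of the triangle.\<close>
lemma heron_triangle_side:
  assumes "0 \<le> a" "0 \<le> b" "0 \<le> t" "t \<le> pi"
  shows "sqrt (((a + b)\<^sup>2 - (triangle_side a b t)\<^sup>2) * ((triangle_side a b t)\<^sup>2 - (a - b)\<^sup>2))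
    = 2 * a * b * sin t"
proof -
  have "0 \<le> a\<^sup>2 + b\<^sup>2 - 2 * a * b * cos t"
    unfolding triangle_side_radicand using assms by simp
  then have "((a + b)\<^sup>2 - (triangle_side a b t)\<^sup>2) * ((triangle_side a b t)\<^sup>2 - (a - b)\<^sup>2)
      = 4 * a\<^sup>2 * b\<^sup>2 * (1 - (cos t)\<^sup>2)"
    by (simp add: triangle_side_def power2_eq_square algebra_simps)
  also have "\<dots> = (2 * a * b * sin t)\<^sup>2"
    by (simp add: sin_squared_eq power_mult_distrib)
  finally show ?thesis
    using assms by (simp add: sin_ge_zero)
qed

lemma triangle_side_jacobian:
  assumes ab: "0 < a" "0 < b" "a \<noteq> b" and t: "0 < t" "t < pi"
  shows "2 * triangle_side a b t
      / sqrt (((a + b)\<^sup>2 - (triangle_side a b t)\<^sup>2) * ((triangle_side a b t)\<^sup>2 - (a - b)\<^sup>2))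
    * (a * b * sin t / triangle_side a b t) = 1"
proof -
  have heron: "sqrt (((a + b)\<^sup>2 - (triangle_side a b t)\<^sup>2) * ((triangle_side a b t)\<^sup>2 - (a - b)\<^sup>2))
      = 2 * a * b * sin t"
    using ab t by (intro heron_triangle_side) auto
  have "0 < sin t"
    using t by (rule sin_gt_zero)
  then show ?thesis
    unfolding heron using ab triangle_side_pos[OF ab, of t] by (simp add: field_simps)
qed

text \<open>The density of the length of \<open>a e^(i t1) + b e^(i t2)\<close> for independent uniform angles.\<close>
definition resultant_length_density :: "real \<Rightarrow> real \<Rightarrow> real \<Rightarrow> real" where
  "resultant_length_density a b z =
    (if \<bar>a - b\<bar> < z \<and> z < a + b
     then 2 * z / (pi * sqrt (((a + b)\<^sup>2 - z\<^sup>2) * (z\<^sup>2 - (a - b)\<^sup>2))) else 0)"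

lemma borel_measurable_resultant_length_density[measurable (raw)]:
  assumes [measurable]: "a \<in> borel_measurable M" "b \<in> borel_measurable M" "z \<in> borel_measurable M"
  shows "(\<lambda>x. resultant_length_density (a x) (b x) (z x)) \<in> borel_measurable M"
  unfolding resultant_length_density_def by measurable

lemma pi_resultant_length_density:
  "pi * resultant_length_density a b z
    = indicator {\<bar>a - b\<bar>..a + b} z * (2 * z / sqrt (((a + b)\<^sup>2 - z\<^sup>2) * (z\<^sup>2 - (a - b)\<^sup>2)))"
proof -
  consider "\<bar>a - b\<bar> < z \<and> z < a + b" | "z = \<bar>a - b\<bar> \<or> z = a + b" | "z \<notin> {\<bar>a - b\<bar>..a + b}"
    by fastforce
  then show ?thesis
  proof cases
    case 2
    \<comment> \<open>At the endpoints the radicand vanishes, and division by zero yields zero.\<close>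
    then show ?thesis
      by (auto simp: resultant_length_density_def power2_abs)
  qed (auto simp: resultant_length_density_def)
qed

lemma nn_integral_triangle_side_substitution:
  fixes H :: "real \<Rightarrow> ennreal"
  assumes ab: "0 < a" "0 < b" "a \<noteq> b" and [measurable]: "H \<in> borel_measurable borel"
  shows "(\<integral>\<^sup>+t\<in>{0..pi}. H (triangle_side a b t) \<partial>lborel)
    = (\<integral>\<^sup>+z. H z * ennreal (pi * resultant_length_density a b z) \<partial>lborel)"
proof -
  let ?z = "triangle_side a b" and ?z' = "\<lambda>t. a * b * sin t / triangle_side a b t"
    and ?J = "\<lambda>z. 2 * z / sqrt (((a + b)\<^sup>2 - z\<^sup>2) * (z\<^sup>2 - (a - b)\<^sup>2))"
  have z'_nonneg: "0 \<le> ?z' t" if "t \<in> {0..pi}" for t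
    using that triangle_side_pos[OF ab, of t] ab
    by (intro divide_nonneg_nonneg mult_nonneg_nonneg sin_ge_zero) auto
  have "(\<integral>\<^sup>+t\<in>{0..pi}. H (?z t) \<partial>lborel)
      = (\<integral>\<^sup>+t\<in>{0..pi}. H (?z t) * ennreal (?J (?z t)) * ennreal (?z' t) \<partial>lborel)"
  proof (rule nn_integral_cong_AE)
    show "AE t in lborel. H (?z t) * indicator {0..pi} t
        = H (?z t) * ennreal (?J (?z t)) * ennreal (?z' t) * indicator {0..pi} t"
      using AE_lborel_singleton[of 0] AE_lborel_singleton[of pi]
    proof eventually_elim
      case (elim t)
      show ?case
      proof (cases "t \<in> {0<..<pi}")
        case True
        then show ?thesis
          using triangle_side_jacobian[OF ab, of t] z'_nonneg[of t]
          by (simp add: mult.assoc flip: ennreal_mult'')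
      qed (use elim in \<open>auto simp: indicator_def\<close>)
    qed
  qed
  also have "\<dots> = (\<integral>\<^sup>+z\<in>{?z 0..?z pi}. H z * ennreal (?J z) \<partial>lborel)"
  proof (rule nn_integral_substitution_aux[symmetric])
    show "continuous_on {0..pi} ?z'"
      using triangle_side_pos[OF ab] unfolding triangle_side_def
      by (intro continuous_intros) (auto simp: less_le)
  qed (use triangle_side_has_real_derivative[OF ab] z'_nonneg in auto)
  also have "\<dots> = (\<integral>\<^sup>+z. H z * ennreal (pi * resultant_length_density a b z) \<partial>lborel)"
    using ab by (intro nn_integral_cong)
      (simp add: triangle_side_0 triangle_side_pi pi_resultant_length_density indicator_def)
  finally show ?thesis .
qed

lemma nn_integral_uniform_angle_density: "(\<integral>\<^sup>+t. ennreal (indicator {0..<2*pi} t / (2*pi)) \<partial>lborel) = 1"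
proof -
  have "(\<integral>\<^sup>+t. ennreal (indicator {0..<2*pi} t / (2*pi)) \<partial>lborel)
      = ennreal (1 / (2*pi)) * emeasure lborel {0..<2*pi}"
    by (subst nn_integral_cmult_indicator[symmetric]) (auto intro!: nn_integral_cong simp: indicator_def)
  also have "\<dots> = 1"
    by (simp flip: ennreal_mult)
  finally show ?thesis .
qed

lemma nn_integral_uniform_angles_triangle_side:
  fixes H :: "real \<Rightarrow> ennreal"
  assumes [measurable]: "H \<in> borel_measurable borel"
  shows "(\<integral>\<^sup>+(t1, t2). ennreal (indicator {0..<2*pi} t1 / (2*pi)) * ennreal (indicator {0..<2*pi} t2 / (2*pi))
        * H (sqrt ((a * cos t1 + b * cos t2)\<^sup>2 + (a * sin t1 + b * sin t2)\<^sup>2)) \<partial>(lborel \<Otimes>\<^sub>M lborel))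
    = ennreal (1 / (2*pi)) * (\<integral>\<^sup>+t\<in>{0..<2*pi}. H (triangle_side a b t) \<partial>lborel)"
proof -
  define F where "F t = H (triangle_side a b t)" for t
  have [measurable]: "F \<in> borel_measurable borel"
    unfolding F_def[abs_def] triangle_side_def[abs_def] by measurable
  let ?u = "\<lambda>t. ennreal (indicator {0..<2*pi} t / (2*pi))"
  let ?c = "ennreal (1 / (2*pi))"
  let ?I = "\<integral>\<^sup>+t\<in>{0..<2*pi}. F t \<partial>lborel"
  have u_eq: "?u t = ?c * indicator {0..<2*pi} t" for t
    by (simp add: indicator_def)
  have inner: "(\<integral>\<^sup>+t1. ?u t1 * ?u t2 * H (sqrt ((a * cos t1 + b * cos t2)\<^sup>2 + (a * sin t1 + b * sin t2)\<^sup>2)) \<partial>lborel)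
      = ?u t2 * (?c * ?I)" for t2
  proof (cases "t2 \<in> {0..<2*pi}")
    case True
    have "(\<integral>\<^sup>+t1. ?u t1 * ?u t2 * H (sqrt ((a * cos t1 + b * cos t2)\<^sup>2 + (a * sin t1 + b * sin t2)\<^sup>2)) \<partial>lborel)
        = (\<integral>\<^sup>+t1. ?u t2 * ?c * (F (t1 - (t2 - pi)) * indicator {0..<2*pi} t1) \<partial>lborel)"
      by (intro nn_integral_cong)
        (simp only: u_eq F_def norm_sum_polar_eq_triangle_side, simp add: algebra_simps)
    also have "\<dots> = ?u t2 * ?c * (\<integral>\<^sup>+t1\<in>{0..<2*pi}. F (t1 - (t2 - pi)) \<partial>lborel)"
      by (rule nn_integral_cmult) measurable
    also have "(\<integral>\<^sup>+t1\<in>{0..<2*pi}. F (t1 - (t2 - pi)) \<partial>lborel) = ?I"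
      using True by (intro nn_integral_periodic_shift) (auto simp: F_def triangle_side_def)
    finally show ?thesis
      by (simp add: mult.assoc)
  qed simp
  have "(\<integral>\<^sup>+(t1, t2). ?u t1 * ?u t2 * H (sqrt ((a * cos t1 + b * cos t2)\<^sup>2 + (a * sin t1 + b * sin t2)\<^sup>2)) \<partial>(lborel \<Otimes>\<^sub>M lborel))
      = (\<integral>\<^sup>+t2. \<integral>\<^sup>+t1. ?u t1 * ?u t2 * H (sqrt ((a * cos t1 + b * cos t2)\<^sup>2 + (a * sin t1 + b * sin t2)\<^sup>2)) \<partial>lborel \<partial>lborel)"
    by (subst lborel_pair.nn_integral_snd[symmetric]) simp_all
  also have "\<dots> = (\<integral>\<^sup>+t2. ?u t2 \<partial>lborel) * (?c * ?I)"
    unfolding inner by (rule nn_integral_multc) measurable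
  finally show ?thesis
    by (simp add: nn_integral_uniform_angle_density F_def)
qed

lemma nn_integral_uniform_angles_resultant:
  fixes H :: "real \<Rightarrow> ennreal"
  assumes ab: "0 < a" "0 < b" "a \<noteq> b" and [measurable]: "H \<in> borel_measurable borel"
  shows "(\<integral>\<^sup>+(t1, t2). ennreal (indicator {0..<2*pi} t1 / (2*pi)) * ennreal (indicator {0..<2*pi} t2 / (2*pi))
        * H (sqrt ((a * cos t1 + b * cos t2)\<^sup>2 + (a * sin t1 + b * sin t2)\<^sup>2)) \<partial>(lborel \<Otimes>\<^sub>M lborel))
    = (\<integral>\<^sup>+z. H z * ennreal (resultant_length_density a b z) \<partial>lborel)"
proof -
  have [measurable]: "(\<lambda>t. H (triangle_side a b t)) \<in> borel_measurable borel"
    unfolding triangle_side_def by measurable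
  have "(\<integral>\<^sup>+z. H z * ennreal (pi * resultant_length_density a b z) \<partial>lborel)
      = ennreal pi * (\<integral>\<^sup>+z. H z * ennreal (resultant_length_density a b z) \<partial>lborel)"
    by (subst nn_integral_cmult[symmetric]) (measurable, simp add: ennreal_mult' ac_simps)
  then have "(\<integral>\<^sup>+t\<in>{0..<2*pi}. H (triangle_side a b t) \<partial>lborel)
      = 2 * (ennreal pi * (\<integral>\<^sup>+z. H z * ennreal (resultant_length_density a b z) \<partial>lborel))"
    using nn_integral_symmetric_halves[of "\<lambda>t. H (triangle_side a b t)" "2*pi"]
      nn_integral_triangle_side_substitution[OF ab]
    by (simp add: triangle_side_def)
  moreover have "ennreal (1 / (2*pi)) * (2 * ennreal pi) = 1"
    by (simp flip: ennreal_mult ennreal_numeral)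
  ultimately show ?thesis
    by (simp add: nn_integral_uniform_angles_triangle_side mult.assoc[symmetric])
qed

definition sum_resultant_density :: "(real \<Rightarrow> real) \<Rightarrow> real \<times> real \<Rightarrow> ennreal" where
  "sum_resultant_density f = (\<lambda>(s, z). if 0 \<le> z \<and> z < s then
        ennreal (2 * z / (pi * sqrt (s\<^sup>2 - z\<^sup>2))) *
        (\<integral>\<^sup>+ x \<in> {(s - z) / 2 <..< (s + z) / 2}.
            ennreal (f x * f (s - x) / sqrt (z\<^sup>2 - (2 * x - s)\<^sup>2)) \<partial>lborel)
      else 0)"

lemma resultant_length_density_sum_diff:
  "resultant_length_density x (s - x) z =
    (if \<bar>2 * x - s\<bar> < z \<and> z < s
     then 2 * z / (pi * sqrt ((s\<^sup>2 - z\<^sup>2) * (z\<^sup>2 - (2 * x - s)\<^sup>2))) else 0)"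
proof -
  have "x + (s - x) = s" "x - (s - x) = 2 * x - s"
    by simp_all
  then show ?thesis
    by (simp only: resultant_length_density_def)
qed

lemma nn_integral_resultant_length_density_sum_diff:
  fixes f :: "real \<Rightarrow> real"
  assumes f_nonneg: "\<And>x. 0 \<le> f x" and [measurable]: "f \<in> borel_measurable borel"
  shows "(\<integral>\<^sup>+x. ennreal (f x) * ennreal (f (s - x)) * ennreal (resultant_length_density x (s - x) z) \<partial>lborel)
    = sum_resultant_density f (s, z)"
proof (cases "0 \<le> z \<and> z < s")
  case True
  define C where "C = 2 * z / (pi * sqrt (s\<^sup>2 - z\<^sup>2))"
  have "z\<^sup>2 < s\<^sup>2"
    using True by (intro power_strict_mono) auto
  then have C_nonneg: "0 \<le> C"
    using True by (simp add: C_def)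
  have integrand: "ennreal (f x) * ennreal (f (s - x)) * ennreal (resultant_length_density x (s - x) z)
      = ennreal C * (ennreal (f x * f (s - x) / sqrt (z\<^sup>2 - (2 * x - s)\<^sup>2))
          * indicator {(s - z) / 2 <..< (s + z) / 2} x)" for x
  proof (cases "\<bar>2 * x - s\<bar> < z")
    case inside: True
    have "(2 * x - s)\<^sup>2 < z\<^sup>2"
      using inside abs_le_square_iff[of z "2 * x - s"] by auto
    then have "ennreal (f x * f (s - x) * resultant_length_density x (s - x) z)
        = ennreal (C * (f x * f (s - x) / sqrt (z\<^sup>2 - (2 * x - s)\<^sup>2)))"
      using True inside by (simp add: resultant_length_density_sum_diff C_def real_sqrt_mult ac_simps)
    moreover have "x \<in> {(s - z) / 2 <..< (s + z) / 2}"
      using inside by (auto simp: abs_less_iff)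
    ultimately show ?thesis
      using C_nonneg f_nonneg[of x] f_nonneg[of "s - x"] by (simp add: ennreal_mult' del: times_divide_eq_right)
  next
    case False
    then have "x \<notin> {(s - z) / 2 <..< (s + z) / 2}"
      by (auto simp: abs_less_iff)
    then show ?thesis
      using False by (simp add: resultant_length_density_sum_diff)
  qed
  show ?thesis
    using True by (simp add: integrand nn_integral_cmult sum_resultant_density_def C_def)
next
  case False
  then have "resultant_length_density x (s - x) z = 0" for x
    by (auto simp: resultant_length_density_sum_diff)
  then show ?thesis
    unfolding sum_resultant_density_def case_prod_conv if_not_P[OF False] by simp
qed

lemma borel_measurable_sum_resultant_density[measurable]:
  assumes "f \<in> borel_measurable borel"
  shows "sum_resultant_density f \<in> borel_measurable (lborel \<Otimes>\<^sub>M lborel)"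
  unfolding sum_resultant_density_def indicator_def greaterThanLessThan_iff using assms by measurable

lemma AE_lborel_pair_distinct:
  assumes ae: "AE x in lborel. P x" and [measurable]: "Measurable.pred borel P"
  shows "AE (x, y) in lborel \<Otimes>\<^sub>M lborel. P x \<and> P y \<and> x \<noteq> y"
proof (rule lborel_pair.AE_pair_measure)
  show "AE x in lborel. AE y in lborel. case (x, y) of (x, y) \<Rightarrow> P x \<and> P y \<and> x \<noteq> y"
    using ae
  proof eventually_elim
    case (elim x)
    show ?case
      using ae AE_lborel_singleton[of x] by eventually_elim (use elim in auto)
  qed
qed measurable

lemma nn_integral_radii_angles:
  fixes f :: "real \<Rightarrow> real" and h :: "real \<times> real \<Rightarrow> ennreal"
  assumes [measurable]: "f \<in> borel_measurable borel" "h \<in> borel_measurable (lborel \<Otimes>\<^sub>M lborel)"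
    and support: "AE x in lborel. f x \<noteq> 0 \<longrightarrow> 0 \<le> x"
  shows "(\<integral>\<^sup>+((r1, r2), (t1, t2)). ennreal (f r1) * ennreal (f r2)
        * (ennreal (indicator {0..<2*pi} t1 / (2*pi)) * ennreal (indicator {0..<2*pi} t2 / (2*pi)))
        * h (r1 + r2, sqrt ((r1 * cos t1 + r2 * cos t2)\<^sup>2 + (r1 * sin t1 + r2 * sin t2)\<^sup>2))
      \<partial>((lborel \<Otimes>\<^sub>M lborel) \<Otimes>\<^sub>M (lborel \<Otimes>\<^sub>M lborel)))
    = (\<integral>\<^sup>+(r1, r2). ennreal (f r1) * ennreal (f r2)
        * (\<integral>\<^sup>+z. h (r1 + r2, z) * ennreal (resultant_length_density r1 r2 z) \<partial>lborel)
      \<partial>(lborel \<Otimes>\<^sub>M lborel))"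
proof -
  let ?A = "\<lambda>r1 r2. \<integral>\<^sup>+(t1, t2). ennreal (indicator {0..<2*pi} t1 / (2*pi)) * ennreal (indicator {0..<2*pi} t2 / (2*pi))
        * h (r1 + r2, sqrt ((r1 * cos t1 + r2 * cos t2)\<^sup>2 + (r1 * sin t1 + r2 * sin t2)\<^sup>2)) \<partial>(lborel \<Otimes>\<^sub>M lborel)"
  have positive_support: "AE x in lborel. f x \<noteq> 0 \<longrightarrow> 0 < x"
    using support AE_lborel_singleton[of 0] by eventually_elim auto
  have generic_radii: "AE (r1, r2) in lborel \<Otimes>\<^sub>M lborel.
      (f r1 \<noteq> 0 \<longrightarrow> 0 < r1) \<and> (f r2 \<noteq> 0 \<longrightarrow> 0 < r2) \<and> r1 \<noteq> r2"
    using positive_support by (rule AE_lborel_pair_distinct) measurable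
  have "(\<integral>\<^sup>+((r1, r2), (t1, t2)). ennreal (f r1) * ennreal (f r2)
        * (ennreal (indicator {0..<2*pi} t1 / (2*pi)) * ennreal (indicator {0..<2*pi} t2 / (2*pi)))
        * h (r1 + r2, sqrt ((r1 * cos t1 + r2 * cos t2)\<^sup>2 + (r1 * sin t1 + r2 * sin t2)\<^sup>2))
      \<partial>((lborel \<Otimes>\<^sub>M lborel) \<Otimes>\<^sub>M (lborel \<Otimes>\<^sub>M lborel)))
    = (\<integral>\<^sup>+(r1, r2). ennreal (f r1) * ennreal (f r2) * ?A r1 r2 \<partial>(lborel \<Otimes>\<^sub>M lborel))"
    by (subst lborel_pair.P.nn_integral_fst[symmetric])
      (measurable, auto intro!: nn_integral_cong simp: nn_integral_cmult[symmetric] split_beta' mult.assoc)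
  also have "\<dots> = (\<integral>\<^sup>+(r1, r2). ennreal (f r1) * ennreal (f r2)
        * (\<integral>\<^sup>+z. h (r1 + r2, z) * ennreal (resultant_length_density r1 r2 z) \<partial>lborel)
      \<partial>(lborel \<Otimes>\<^sub>M lborel))"
  proof (rule nn_integral_cong_AE)
    have "ennreal (f r1) * ennreal (f r2) * ?A r1 r2
      = ennreal (f r1) * ennreal (f r2) * (\<integral>\<^sup>+z. h (r1 + r2, z) * ennreal (resultant_length_density r1 r2 z) \<partial>lborel)"
      if "(f r1 \<noteq> 0 \<longrightarrow> 0 < r1) \<and> (f r2 \<noteq> 0 \<longrightarrow> 0 < r2) \<and> r1 \<noteq> r2" for r1 r2
    proof (cases "f r1 = 0 \<or> f r2 = 0")
      case False
      with that show ?thesis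
        by (subst nn_integral_uniform_angles_resultant) auto
    qed auto
    with generic_radii show "AE p in lborel \<Otimes>\<^sub>M lborel.
        (case p of (r1, r2) \<Rightarrow> ennreal (f r1) * ennreal (f r2) * ?A r1 r2)
      = (case p of (r1, r2) \<Rightarrow> ennreal (f r1) * ennreal (f r2)
          * (\<integral>\<^sup>+z. h (r1 + r2, z) * ennreal (resultant_length_density r1 r2 z) \<partial>lborel))"
      by (auto elim!: eventually_mono)
  qed
  finally show ?thesis .
qed

lemma nn_integral_radii_to_sum:
  fixes f :: "real \<Rightarrow> real" and h :: "real \<times> real \<Rightarrow> ennreal"
  assumes f_nonneg: "\<And>x. 0 \<le> f x"
    and [measurable]: "f \<in> borel_measurable borel" "h \<in> borel_measurable (lborel \<Otimes>\<^sub>M lborel)"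
  shows "(\<integral>\<^sup>+(r1, r2). ennreal (f r1) * ennreal (f r2)
        * (\<integral>\<^sup>+z. h (r1 + r2, z) * ennreal (resultant_length_density r1 r2 z) \<partial>lborel)
      \<partial>(lborel \<Otimes>\<^sub>M lborel))
    = (\<integral>\<^sup>+p. sum_resultant_density f p * h p \<partial>(lborel \<Otimes>\<^sub>M lborel))"
proof -
  define \<Phi> where "\<Phi> r1 s z = ennreal (f r1) * ennreal (f (s - r1))
    * ennreal (resultant_length_density r1 (s - r1) z) * h (s, z)" for r1 s z
  have [measurable (raw)]: "(\<lambda>x. \<Phi> (r1 x) (s x) (z x)) \<in> borel_measurable M"
    if [measurable]: "r1 \<in> borel_measurable M" "s \<in> borel_measurable M" "z \<in> borel_measurable M"
    for r1 s z and M :: "'b measure"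
    unfolding \<Phi>_def by measurable
  have "(\<integral>\<^sup>+(r1, r2). ennreal (f r1) * ennreal (f r2)
        * (\<integral>\<^sup>+z. h (r1 + r2, z) * ennreal (resultant_length_density r1 r2 z) \<partial>lborel)
      \<partial>(lborel \<Otimes>\<^sub>M lborel))
    = (\<integral>\<^sup>+r1. \<integral>\<^sup>+r2. ennreal (f r1) * ennreal (f r2)
        * (\<integral>\<^sup>+z. h (r1 + r2, z) * ennreal (resultant_length_density r1 r2 z) \<partial>lborel) \<partial>lborel \<partial>lborel)"
    by (subst lborel.nn_integral_fst[symmetric]) simp_all
  also have "\<dots> = (\<integral>\<^sup>+r1. \<integral>\<^sup>+s. \<integral>\<^sup>+z. \<Phi> r1 s z \<partial>lborel \<partial>lborel \<partial>lborel)"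
  proof (rule nn_integral_cong)
    fix r1 :: real
    show "(\<integral>\<^sup>+r2. ennreal (f r1) * ennreal (f r2)
        * (\<integral>\<^sup>+z. h (r1 + r2, z) * ennreal (resultant_length_density r1 r2 z) \<partial>lborel) \<partial>lborel)
      = (\<integral>\<^sup>+s. \<integral>\<^sup>+z. \<Phi> r1 s z \<partial>lborel \<partial>lborel)"
      using nn_integral_real_affine[where c=1 and t="-r1",
          of "\<lambda>r2. ennreal (f r1) * ennreal (f r2)
            * (\<integral>\<^sup>+z. h (r1 + r2, z) * ennreal (resultant_length_density r1 r2 z) \<partial>lborel)"]
      by (simp add: \<Phi>_def nn_integral_cmult[symmetric] ac_simps)
  qed
  also have "\<dots> = (\<integral>\<^sup>+s. \<integral>\<^sup>+z. \<integral>\<^sup>+r1. \<Phi> r1 s z \<partial>lborel \<partial>lborel \<partial>lborel)"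
    by (subst lborel_pair.Fubini') (auto intro!: nn_integral_cong lborel_pair.Fubini')
  also have "\<dots> = (\<integral>\<^sup>+s. \<integral>\<^sup>+z. sum_resultant_density f (s, z) * h (s, z) \<partial>lborel \<partial>lborel)"
    by (simp add: \<Phi>_def nn_integral_multc
        nn_integral_resultant_length_density_sum_diff[OF f_nonneg, symmetric])
  also have "\<dots> = (\<integral>\<^sup>+p. sum_resultant_density f p * h p \<partial>(lborel \<Otimes>\<^sub>M lborel))"
    by (subst lborel.nn_integral_fst[symmetric]) simp_all
  finally show ?thesis .
qed

lemma distributed_compose_density:
  assumes X: "distributed M N X g" and [measurable]: "T \<in> N \<rightarrow>\<^sub>M L" "f \<in> borel_measurable L"
    and eq: "\<And>A. A \<in> sets L \<Longrightarrow> (\<integral>\<^sup>+y. g y * indicator A (T y) \<partial>N) = (\<integral>\<^sup>+x\<in>A. f x \<partial>L)"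
  shows "distributed M L (\<lambda>\<omega>. T (X \<omega>)) f"
proof -
  have [measurable]: "X \<in> M \<rightarrow>\<^sub>M N"
    using distributed_measurable[OF X] by simp
  have "emeasure (distr M L (\<lambda>\<omega>. T (X \<omega>))) A = emeasure (density L f) A" if A: "A \<in> sets L" for A
  proof -
    have "emeasure (distr M L (\<lambda>\<omega>. T (X \<omega>))) A = (\<integral>\<^sup>+\<omega>. indicator A (T (X \<omega>)) \<partial>M)"
      using A by (simp flip: nn_integral_indicator add: nn_integral_distr)
    also have "\<dots> = (\<integral>\<^sup>+y. g y * indicator A (T y) \<partial>N)"
      using A by (simp add: distributed_nn_integral[OF X])
    also have "\<dots> = emeasure (density L f) A"
      using A by (simp add: eq emeasure_density)
    finally show ?thesis .
  qed
  then show ?thesis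
    unfolding distributed_def by (auto intro: measure_eqI)
qed

lemma (in prob_space) indep_var_restrict_compose:
  assumes "indep_vars M' X I" "A \<inter> B = {}" "A \<subseteq> I" "B \<subseteq> I"
    and "Y1 \<in> Pi\<^sub>M A M' \<rightarrow>\<^sub>M N1" "Y2 \<in> Pi\<^sub>M B M' \<rightarrow>\<^sub>M N2"
  shows "indep_var N1 (\<lambda>\<omega>. Y1 (\<lambda>i\<in>A. X i \<omega>)) N2 (\<lambda>\<omega>. Y2 (\<lambda>i\<in>B. X i \<omega>))"
  using indep_var_compose[OF indep_var_restrict[OF assms(1-4)] assms(5,6)] by (simp add: comp_def)

lemma (in prob_space) distributed_indep_vars_pairs:
  fixes X1 X2 X3 X4 :: "'a \<Rightarrow> real"
  assumes indep: "indep_vars (\<lambda>_. borel) (\<lambda>i. [X1, X2, X3, X4] ! i) {0..<4}"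
    and X1: "distributed M lborel X1 f1" and X2: "distributed M lborel X2 f2"
    and X3: "distributed M lborel X3 f3" and X4: "distributed M lborel X4 f4"
  shows "distributed M ((lborel \<Otimes>\<^sub>M lborel) \<Otimes>\<^sub>M (lborel \<Otimes>\<^sub>M lborel))
    (\<lambda>\<omega>. ((X1 \<omega>, X2 \<omega>), (X3 \<omega>, X4 \<omega>))) (\<lambda>((x1, x2), (x3, x4)). f1 x1 * f2 x2 * (f3 x3 * f4 x4))"
proof -
  have sigma_finite: "sigma_finite_measure (lborel :: real measure)"
    "sigma_finite_measure (lborel \<Otimes>\<^sub>M lborel :: (real \<times> real) measure)"
    by (rule lborel.sigma_finite_measure_axioms lborel_pair.P.sigma_finite_measure_axioms)+
  have "indep_var lborel (\<lambda>\<omega>. (\<lambda>i\<in>{0}. ([X1, X2, X3, X4] ! i) \<omega>) 0) lborel (\<lambda>\<omega>. (\<lambda>i\<in>{1}. ([X1, X2, X3, X4] ! i) \<omega>) 1)"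
    by (rule indep_var_restrict_compose[OF indep]) auto
  then have X12: "indep_var lborel X1 lborel X2"
    by simp
  have "indep_var lborel (\<lambda>\<omega>. (\<lambda>i\<in>{2}. ([X1, X2, X3, X4] ! i) \<omega>) 2) lborel (\<lambda>\<omega>. (\<lambda>i\<in>{3}. ([X1, X2, X3, X4] ! i) \<omega>) 3)"
    by (rule indep_var_restrict_compose[OF indep]) auto
  then have X34: "indep_var lborel X3 lborel X4"
    by (simp add: numeral_eq_Suc)
  have "indep_var (lborel \<Otimes>\<^sub>M lborel) (\<lambda>\<omega>. (\<lambda>x. (x 0, x 1)) (\<lambda>i\<in>{0, 1}. ([X1, X2, X3, X4] ! i) \<omega>))
      (lborel \<Otimes>\<^sub>M lborel) (\<lambda>\<omega>. (\<lambda>x. (x 2, x 3)) (\<lambda>i\<in>{2, 3}. ([X1, X2, X3, X4] ! i) \<omega>))"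
    by (rule indep_var_restrict_compose[OF indep]) auto
  then have "indep_var (lborel \<Otimes>\<^sub>M lborel) (\<lambda>\<omega>. (X1 \<omega>, X2 \<omega>)) (lborel \<Otimes>\<^sub>M lborel) (\<lambda>\<omega>. (X3 \<omega>, X4 \<omega>))"
    by (simp add: numeral_eq_Suc)
  then have "distributed M ((lborel \<Otimes>\<^sub>M lborel) \<Otimes>\<^sub>M (lborel \<Otimes>\<^sub>M lborel))
    (\<lambda>\<omega>. ((X1 \<omega>, X2 \<omega>), (X3 \<omega>, X4 \<omega>)))
    (\<lambda>(x, y). (\<lambda>(x1, x2). f1 x1 * f2 x2) x * (\<lambda>(x3, x4). f3 x3 * f4 x4) y)"
    using X12 X34 X1 X2 X3 X4 by (intro distributed_joint_indep sigma_finite)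
  then show ?thesis
    by (simp add: case_prod_beta')
qed

theorem corollary3:
  fixes M :: "'a measure"
    and R1 R2 \<Theta>1 \<Theta>2 :: "'a \<Rightarrow> real"
    and fR :: "real \<Rightarrow> real"
  assumes "prob_space M"
    and "prob_space.indep_vars M (\<lambda>_. borel) (\<lambda>i. [R1, R2, \<Theta>1, \<Theta>2] ! i) {0..<4}"
    and "\<And>x. fR x \<ge> 0"
    and "distributed M lborel R1 (\<lambda>x. ennreal (fR x))"
    and "distributed M lborel R2 (\<lambda>x. ennreal (fR x))"
    and "AE \<omega> in M. R1 \<omega> \<ge> 0"
    and "AE \<omega> in M. R2 \<omega> \<ge> 0"
    and "distributed M lborel \<Theta>1 (\<lambda>x. ennreal (indicator {0..<2*pi} x / (2*pi)))"
    and "distributed M lborel \<Theta>2 (\<lambda>x. ennreal (indicator {0..<2*pi} x / (2*pi)))"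
  shows "distributed M (lborel \<Otimes>\<^sub>M lborel)
     (\<lambda>\<omega>. (R1 \<omega> + R2 \<omega>,
            sqrt ((R1 \<omega> * cos (\<Theta>1 \<omega>) + R2 \<omega> * cos (\<Theta>2 \<omega>))\<^sup>2
                + (R1 \<omega> * sin (\<Theta>1 \<omega>) + R2 \<omega> * sin (\<Theta>2 \<omega>))\<^sup>2)))
     (\<lambda>(s, z). if 0 \<le> z \<and> z < s then
        ennreal (2 * z / (pi * sqrt (s\<^sup>2 - z\<^sup>2))) *
        (\<integral>\<^sup>+ x \<in> {(s - z) / 2 <..< (s + z) / 2}.
            ennreal (fR x * fR (s - x) / sqrt (z\<^sup>2 - (2 * x - s)\<^sup>2)) \<partial>lborel)
      else 0)"
proof -
  interpret prob_space M by fact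
  have "(\<lambda>x. enn2real (ennreal (fR x))) \<in> borel_measurable borel"
    using distributed_borel_measurable[OF assms(4)] by measurable
  then have [measurable]: "fR \<in> borel_measurable borel"
    using assms(3) by simp
  have "AE x in lborel. 0 < ennreal (fR x) \<longrightarrow> 0 \<le> x"
    using assms(6) by (simp add: distributed_AE2[OF assms(4)])
  then have support: "AE x in lborel. fR x \<noteq> 0 \<longrightarrow> 0 \<le> x"
    using assms(3) by (auto elim!: eventually_mono simp: order_neq_le_trans)
  define T where "T = (\<lambda>((r1, r2), (t1, t2)).
    (r1 + r2, sqrt ((r1 * cos t1 + r2 * cos t2)\<^sup>2 + (r1 * sin t1 + r2 * sin t2)\<^sup>2)))"
  have "distributed M (lborel \<Otimes>\<^sub>M lborel) (\<lambda>\<omega>. T ((R1 \<omega>, R2 \<omega>), (\<Theta>1 \<omega>, \<Theta>2 \<omega>)))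
      (sum_resultant_density fR)"
    using nn_integral_radii_angles[OF _ _ support] nn_integral_radii_to_sum[of fR, OF assms(3)]
    by (intro distributed_compose_density[OF distributed_indep_vars_pairs[OF assms(2,4,5,8,9)]])
      (auto simp: T_def split_beta')
  then show ?thesis
    by (simp add: T_def sum_resultant_density_def)
qed

end
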